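(* Let $G_k=(V,E,k)$ be a simple digraph with positive edge labels $k\in\mathbb{R}^E_{>0}$ and one (weakly connected) component, with $V=\{1,\dots,m\}$. Let $T=\{1,\dots,t\}\subseteq V_s$ be (the vertex set of) a terminal strong component, and let $\hat q\in\mathbb{R}^{V_s}_{\ge0}$ satisfy $R_k\hat q=0$, $\operatorname{supp}\hat q=T$, and $\hat q_1\ge\cdots\ge\hat q_t>0$. Let $\beta=R_k1_{V_s}\in\mathbb{R}^V$. Then $\sum_{i'=1}^{i}\beta_{i'}\ge0$ for every $i\in T$; if $i<t$ and $\hat q_i>\hat q_{i+1}$, then $\sum_{i'=1}^{i}\beta_{i'}>0$; and $\sum_{i'=1}^{t}\beta_{i'}=0$ if and only if $T=V$.
   Context: $V_s\subseteq V$ is the set of vertices with at least one outgoing edge. The rectangular Laplacian $R_k\in\mathbb{R}^{V\times V_s}$ has entries $(R_k)_{i,j}=k_{j\to i}$ if $(j\to i)\in E$, $(R_k)_{j,j}=-\sum_{(j\to i')\in E}k_{j\to i'}$, and $0$ otherwise. $1_{V_s}$ is the all-ones vector. A terminal strong component is a strongly connected component with no edge leaving it. *)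

theory Defs
  imports Complex_Main
begin

text \<open>A labelled digraph is given by a vertex set V, an edge set E of ordered
pairs (j,i) meaning the edge j -> i, and edge labels k.\<close>

definition simple_digraph :: "nat set \<Rightarrow> (nat \<times> nat) set \<Rightarrow> bool" where
  "simple_digraph V E \<longleftrightarrow> finite V \<and> E \<subseteq> V \<times> V \<and> (\<forall>v. (v, v) \<notin> E)"

definition weakly_connected :: "nat set \<Rightarrow> (nat \<times> nat) set \<Rightarrow> bool" where
  "weakly_connected V E \<longleftrightarrow> V \<noteq> {} \<and> (\<forall>u\<in>V. \<forall>v\<in>V. (u, v) \<in> (E \<union> E\<inverse>)\<^sup>*)"

definition source_vertices :: "nat set \<Rightarrow> (nat \<times> nat) set \<Rightarrow> nat set" where
  "source_vertices V E = {j \<in> V. \<exists>i. (j, i) \<in> E}"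

definition strong_component :: "nat set \<Rightarrow> (nat \<times> nat) set \<Rightarrow> nat set \<Rightarrow> bool" where
  "strong_component V E C \<longleftrightarrow> C \<noteq> {} \<and> C \<subseteq> V \<and>
     (\<forall>u\<in>C. \<forall>v\<in>C. (u, v) \<in> E\<^sup>*) \<and>
     (\<forall>u\<in>C. \<forall>v\<in>V. (u, v) \<in> E\<^sup>* \<and> (v, u) \<in> E\<^sup>* \<longrightarrow> v \<in> C)"

definition terminal_strong_component :: "nat set \<Rightarrow> (nat \<times> nat) set \<Rightarrow> nat set \<Rightarrow> bool" where
  "terminal_strong_component V E C \<longleftrightarrow> strong_component V E C \<and>
     (\<forall>u v. (u, v) \<in> E \<and> u \<in> C \<longrightarrow> v \<in> C)"

text \<open>Entry (i,j) of the rectangular Laplacian R_k (i in V, j in V_s).\<close>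
definition rect_laplacian :: "(nat \<times> nat) set \<Rightarrow> (nat \<times> nat \<Rightarrow> real) \<Rightarrow> nat \<Rightarrow> nat \<Rightarrow> real" where
  "rect_laplacian E k i j =
     (if (j, i) \<in> E then k (j, i)
      else if i = j then - (\<Sum>i'\<in>{i'. (j, i') \<in> E}. k (j, i'))
      else 0)"

definition rect_laplacian_mult ::
  "nat set \<Rightarrow> (nat \<times> nat) set \<Rightarrow> (nat \<times> nat \<Rightarrow> real) \<Rightarrow> (nat \<Rightarrow> real) \<Rightarrow> nat \<Rightarrow> real" where
  "rect_laplacian_mult V E k x i = (\<Sum>j\<in>source_vertices V E. rect_laplacian E k i j * x j)"

end

theory Submission imports Defs begin

text \<open>Summing the rows of \<open>R\<^sub>k x\<close> over a vertex set \<open>S\<close> turns the Laplacian into the net flux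
  across the boundary of \<open>S\<close>: an edge \<open>a \<rightarrow> b\<close> carrying \<open>k (a,b) * x a\<close> contributes positively
  when it enters \<open>S\<close> and negatively when it leaves. Since \<open>R\<^sub>k q = 0\<close>, the flux of \<open>q\<close> across
  every prefix \<open>{1..i}\<close> of \<open>T\<close> vanishes. For \<open>i < t\<close>, the prefix consists of vertices with
  \<open>q \<ge> q (i+1)\<close> and all other sources have \<open>q \<le> q (i+1)\<close>, so the flux of \<open>q\<close> is at most
  \<open>q (i+1)\<close> times the flux of \<open>1\<^sub>V\<^sub>s\<close>, which is the prefix sum of \<open>\<beta>\<close>; it is strictly smaller
  when \<open>q i > q (i+1)\<close>, because strong connectivity of \<open>T\<close> forces an edge out of the prefix.
  For the whole of \<open>T\<close>, which no edge leaves, the flux of \<open>1\<^sub>V\<^sub>s\<close> is the total label of the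
  edges entering \<open>T\<close>, and by weak connectivity such an edge exists unless \<open>T = V\<close>.\<close>

definition boundary_flux ::
  "(nat \<times> nat) set \<Rightarrow> (nat \<times> nat \<Rightarrow> real) \<Rightarrow> (nat \<Rightarrow> real) \<Rightarrow> nat set \<Rightarrow> real" where
  "boundary_flux E k x S = (\<Sum>(a, b)\<in>E. k (a, b) * x a * (of_bool (b \<in> S) - of_bool (a \<in> S)))"

lemma finite_out_neighbours:
  assumes "simple_digraph V E"
  shows "finite {i. (j, i) \<in> E}"
  using assms by (auto simp: simple_digraph_def intro: finite_subset[of _ V])

lemma sum_rect_laplacian_column:
  assumes G: "simple_digraph V E" and SV: "S \<subseteq> V"
  shows "(\<Sum>i\<in>S. rect_laplacian E k i j)
       = (\<Sum>i\<in>{i. (j, i) \<in> E}. k (j, i) * (of_bool (i \<in> S) - of_bool (j \<in> S)))"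
proof -
  define N where "N = {i. (j, i) \<in> E}"
  have finN: "finite N" unfolding N_def using finite_out_neighbours[OF G] .
  have finS: "finite S" using G SV finite_subset by (auto simp: simple_digraph_def)
  have "(\<Sum>i\<in>S. rect_laplacian E k i j)
      = (\<Sum>i\<in>S. (if i \<in> N then k (j, i) else 0) + (if i = j then - sum (\<lambda>i. k (j, i)) N else 0))"
    using G by (intro sum.cong) (auto simp: rect_laplacian_def N_def simple_digraph_def)
  also have "\<dots> = (\<Sum>i\<in>S \<inter> N. k (j, i)) - of_bool (j \<in> S) * sum (\<lambda>i. k (j, i)) N"
    by (simp add: sum.distrib sum.inter_restrict[OF finS] finS)
  also have "(\<Sum>i\<in>S \<inter> N. k (j, i)) = (\<Sum>i\<in>N. k (j, i) * of_bool (i \<in> S))"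
    using sum.inter_restrict[OF finN, of "\<lambda>i. k (j, i)" S]
    by (simp add: Int_commute of_bool_def if_distrib cong: if_cong)
  also have "\<dots> - of_bool (j \<in> S) * sum (\<lambda>i. k (j, i)) N
      = (\<Sum>i\<in>N. k (j, i) * (of_bool (i \<in> S) - of_bool (j \<in> S)))"
    by (simp add: right_diff_distrib sum_subtractf sum_distrib_left mult.commute)
  finally show ?thesis unfolding N_def .
qed

lemma sum_rect_laplacian_mult_eq_boundary_flux:
  assumes G: "simple_digraph V E" and SV: "S \<subseteq> V"
  shows "(\<Sum>i\<in>S. rect_laplacian_mult V E k x i) = boundary_flux E k x S"
proof -
  let ?Vs = "source_vertices V E"
  have finVs: "finite ?Vs" using G by (simp add: source_vertices_def simple_digraph_def)
  have "(\<Sum>i\<in>S. rect_laplacian_mult V E k x i) = (\<Sum>j\<in>?Vs. (\<Sum>i\<in>S. rect_laplacian E k i j) * x j)"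
    unfolding rect_laplacian_mult_def by (subst sum.swap) (simp add: sum_distrib_right)
  also have "\<dots> = (\<Sum>j\<in>?Vs. \<Sum>i\<in>{i. (j, i) \<in> E}. k (j, i) * x j * (of_bool (i \<in> S) - of_bool (j \<in> S)))"
    by (simp add: sum_rect_laplacian_column[OF G SV] sum_distrib_left mult_ac)
  also have "\<dots> = (\<Sum>(j, i)\<in>Sigma ?Vs (\<lambda>j. {i. (j, i) \<in> E}). k (j, i) * x j * (of_bool (i \<in> S) - of_bool (j \<in> S)))"
    by (subst sum.Sigma[OF finVs]) (auto simp: finite_out_neighbours[OF G])
  also have "Sigma ?Vs (\<lambda>j. {i. (j, i) \<in> E}) = E"
    using G by (auto simp: source_vertices_def simple_digraph_def)
  finally show ?thesis unfolding boundary_flux_def .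
qed

lemma rtrancl_exits_set:
  assumes "(u, v) \<in> R\<^sup>*" "u \<in> S" "v \<notin> S"
  shows "\<exists>a b. (a, b) \<in> R \<and> a \<in> S \<and> b \<notin> S"
  using assms by (induction rule: rtrancl_induct) auto

lemma weakly_connected_no_boundary_edges:
  assumes conn: "weakly_connected V E" and "S \<subseteq> V" "S \<noteq> {}"
    and no_boundary: "\<forall>(a, b)\<in>E. a \<in> S \<longleftrightarrow> b \<in> S"
  shows "S = V"
proof (rule ccontr)
  assume "S \<noteq> V"
  then obtain v where v: "v \<in> V" "v \<notin> S" using \<open>S \<subseteq> V\<close> by blast
  obtain u where u: "u \<in> S" using \<open>S \<noteq> {}\<close> by blast
  have "(u, v) \<in> (E \<union> E\<inverse>)\<^sup>*"
    using conn u v \<open>S \<subseteq> V\<close> by (simp add: weakly_connected_def subset_iff)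
  from rtrancl_exits_set[OF this u v(2)]
  obtain a b where "(a, b) \<in> E \<union> E\<inverse>" "a \<in> S" "b \<notin> S" by blast
  with no_boundary show False by auto
qed

lemma antitone_stepwise:
  fixes q :: "nat \<Rightarrow> real"
  assumes decr: "\<forall>i. 1 \<le> i \<and> i < t \<longrightarrow> q i \<ge> q (i + 1)" and "1 \<le> a" "a \<le> b" "b \<le> t"
  shows "q b \<le> q a"
  using assms(3,4)
proof (induction b rule: dec_induct)
  case (step n)
  then have "q (n + 1) \<le> q n" using decr \<open>1 \<le> a\<close> by auto
  with step show ?case by simp
qed simp

lemma boundary_flux_le_threshold:
  assumes "\<forall>e\<in>E. 0 \<le> k e"
    and "\<forall>(a, b)\<in>E. a \<in> S \<longrightarrow> p \<le> x a" and "\<forall>(a, b)\<in>E. a \<notin> S \<longrightarrow> x a \<le> p"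
  shows "boundary_flux E k x S \<le> p * boundary_flux E k (\<lambda>_. 1) S"
  unfolding boundary_flux_def sum_distrib_left
proof (rule sum_mono, clarify)
  fix a b assume "(a, b) \<in> E"
  with assms have "0 \<le> k (a, b)" "a \<in> S \<Longrightarrow> p \<le> x a" "a \<notin> S \<Longrightarrow> x a \<le> p" by auto
  then have "a \<in> S \<Longrightarrow> p * k (a, b) \<le> x a * k (a, b)" "a \<notin> S \<Longrightarrow> x a * k (a, b) \<le> p * k (a, b)"
    by (simp_all add: mult_right_mono)
  then show "k (a, b) * x a * (of_bool (b \<in> S) - of_bool (a \<in> S))
      \<le> p * (k (a, b) * 1 * (of_bool (b \<in> S) - of_bool (a \<in> S)))"
    by (cases "a \<in> S"; cases "b \<in> S") (auto simp: mult.commute)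
qed

lemma boundary_flux_less_threshold:
  assumes "finite E" "\<forall>e\<in>E. 0 < k e"
    and "\<forall>(a, b)\<in>E. a \<in> S \<longrightarrow> p \<le> x a" and "\<forall>(a, b)\<in>E. a \<notin> S \<longrightarrow> x a \<le> p"
    and exit: "(a, b) \<in> E" "a \<in> S" "b \<notin> S" and "p < x a"
  shows "boundary_flux E k x S < p * boundary_flux E k (\<lambda>_. 1) S"
proof -
  let ?f = "\<lambda>(a, b). k (a, b) * x a * (of_bool (b \<in> S) - of_bool (a \<in> S))"
  let ?F = "boundary_flux E k x S" and ?F1 = "boundary_flux E k (\<lambda>_. 1) S"
  have "?F - ?f (a, b) \<le> p * ?F1 - p * k (a, b) * (- 1)"
  proof -
    have "?F - ?f (a, b) = boundary_flux (E - {(a, b)}) k x S"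
      using exit \<open>finite E\<close> by (simp add: boundary_flux_def sum_diff1)
    also have "\<dots> \<le> p * boundary_flux (E - {(a, b)}) k (\<lambda>_. 1) S"
      using assms by (intro boundary_flux_le_threshold) auto
    also have "\<dots> = p * ?F1 - p * k (a, b) * (- 1)"
      using exit \<open>finite E\<close> by (simp add: boundary_flux_def sum_diff1 algebra_simps)
    finally show ?thesis .
  qed
  moreover have "p * k (a, b) < x a * k (a, b)"
    using assms by (simp add: mult_strict_right_mono)
  ultimately show ?thesis using exit by (simp add: algebra_simps)
qed

lemma boundary_flux_one_eq_0_iff:
  assumes "finite E" "\<forall>e\<in>E. 0 < k e" and "\<forall>(a, b)\<in>E. a \<in> S \<longrightarrow> b \<in> S"
  shows "boundary_flux E k (\<lambda>_. 1) S = 0 \<longleftrightarrow> (\<forall>(a, b)\<in>E. b \<in> S \<longrightarrow> a \<in> S)"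
proof -
  have nonneg: "\<forall>(a, b)\<in>E. 0 \<le> k (a, b) * 1 * (of_bool (b \<in> S) - of_bool (a \<in> S))"
    using assms by fastforce
  have "boundary_flux E k (\<lambda>_. 1) S = 0
      \<longleftrightarrow> (\<forall>(a, b)\<in>E. k (a, b) * 1 * (of_bool (b \<in> S) - of_bool (a \<in> S)) = 0)"
    unfolding boundary_flux_def using nonneg \<open>finite E\<close> by (subst sum_nonneg_eq_0_iff) auto
  also have "\<dots> \<longleftrightarrow> (\<forall>(a, b)\<in>E. b \<in> S \<longrightarrow> a \<in> S)"
    using assms by fastforce
  finally show ?thesis .
qed

locale terminal_kernel =
  fixes m t :: nat and E :: "(nat \<times> nat) set" and k :: "nat \<times> nat \<Rightarrow> real" and q :: "nat \<Rightarrow> real"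
  assumes simple: "simple_digraph {1..m} E"
    and kpos: "\<forall>e\<in>E. k e > 0"
    and conn: "weakly_connected {1..m} E"
    and Tterm: "terminal_strong_component {1..m} E {1..t}"
    and qnonneg: "\<forall>j\<in>source_vertices {1..m} E. q j \<ge> 0"
    and qker: "\<forall>i\<in>{1..m}. rect_laplacian_mult {1..m} E k q i = 0"
    and qsupp: "{j \<in> source_vertices {1..m} E. q j \<noteq> 0} = {1..t}"
    and qmono: "\<forall>i. 1 \<le> i \<and> i < t \<longrightarrow> q i \<ge> q (i + 1)"
begin

lemma finite_edges: "finite E"
  using simple finite_subset[of E "{1..m} \<times> {1..m}"] by (simp add: simple_digraph_def)

lemma
  shows T_strongly_connected: "\<forall>u\<in>{1..t}. \<forall>v\<in>{1..t}. (u, v) \<in> E\<^sup>*"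
    and T_closed: "\<forall>(a, b)\<in>E. a \<in> {1..t} \<longrightarrow> b \<in> {1..t}"
    and T_nonempty: "1 \<le> t" and T_le: "t \<le> m"
proof -
  have sc: "strong_component {1..m} E {1..t}"
    and cl: "\<forall>u v. (u, v) \<in> E \<and> u \<in> {1..t} \<longrightarrow> v \<in> {1..t}"
    using Tterm unfolding terminal_strong_component_def by blast+
  then show "\<forall>(a, b)\<in>E. a \<in> {1..t} \<longrightarrow> b \<in> {1..t}" by blast
  have ne: "{1..t} \<noteq> {}" and sub: "{1..t} \<subseteq> {1..m}"
    and "\<forall>u\<in>{1..t}. \<forall>v\<in>{1..t}. (u, v) \<in> E\<^sup>*"
    using sc unfolding strong_component_def by blast+
  then show "\<forall>u\<in>{1..t}. \<forall>v\<in>{1..t}. (u, v) \<in> E\<^sup>*" by blast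
  from ne show "1 \<le> t" by simp
  with sub show "t \<le> m" by auto
qed

lemma q_pos:
  assumes "j \<in> {1..t}"
  shows "0 < q j"
proof -
  have "j \<in> {j \<in> source_vertices {1..m} E. q j \<noteq> 0}"
    using assms qsupp by simp
  then show ?thesis using qnonneg by (simp add: order.strict_iff_order)
qed

lemma q_zero_outside:
  assumes "(a, b) \<in> E" "a \<notin> {1..t}"
  shows "q a = 0"
proof -
  have "a \<in> source_vertices {1..m} E"
    using assms(1) simple by (auto simp: source_vertices_def simple_digraph_def)
  then show ?thesis using assms(2) qsupp by blast
qed

lemma boundary_flux_q_prefix:
  assumes "c \<le> t"
  shows "boundary_flux E k q {1..c} = 0"
proof -
  have "boundary_flux E k q {1..c} = (\<Sum>i\<in>{1..c}. rect_laplacian_mult {1..m} E k q i)"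
    using assms T_le by (intro sum_rect_laplacian_mult_eq_boundary_flux[OF simple, symmetric]) auto
  also have "\<dots> = 0"
    using assms T_le qker by (intro sum.neutral) auto
  finally show ?thesis .
qed

text \<open>For \<open>i = t\<close> the threshold \<open>q t\<close> works as well, since \<open>q\<close> vanishes at sources outside \<open>T\<close>.\<close>
lemma prefix_threshold:
  assumes i: "i \<in> {1..t}"
  defines "p \<equiv> q (min (i + 1) t)"
  shows "\<forall>(a, b)\<in>E. a \<in> {1..i} \<longrightarrow> p \<le> q a"
    and "\<forall>(a, b)\<in>E. a \<notin> {1..i} \<longrightarrow> q a \<le> p"
  using i q_zero_outside q_pos[of "min (i + 1) t"] antitone_stepwise[OF qmono]
  unfolding p_def by fastforce+

lemma prefix_boundary_flux_nonneg:
  assumes i: "i \<in> {1..t}"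
  shows "0 \<le> boundary_flux E k (\<lambda>_. 1) {1..i}"
proof -
  have "0 = boundary_flux E k q {1..i}" using i boundary_flux_q_prefix by simp
  also have "\<dots> \<le> q (min (i + 1) t) * boundary_flux E k (\<lambda>_. 1) {1..i}"
    using kpos prefix_threshold[OF i] by (intro boundary_flux_le_threshold) auto
  finally show ?thesis using q_pos[of "min (i + 1) t"] i by (simp add: zero_le_mult_iff)
qed

lemma prefix_boundary_flux_pos:
  assumes i: "i \<in> {1..t}" "i < t" and drop: "q (i + 1) < q i"
  shows "0 < boundary_flux E k (\<lambda>_. 1) {1..i}"
proof -
  obtain a b where exit: "(a, b) \<in> E" "a \<in> {1..i}" "b \<notin> {1..i}"
    using rtrancl_exits_set[of 1 t E "{1..i}"] T_strongly_connected i by auto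
  have "q (i + 1) < q a" using drop antitone_stepwise[OF qmono, of a i] exit i by force
  moreover have "min (i + 1) t = i + 1" using i by simp
  note threshold = prefix_threshold[OF i(1), unfolded this]
  ultimately have "boundary_flux E k q {1..i} < q (i + 1) * boundary_flux E k (\<lambda>_. 1) {1..i}"
    using boundary_flux_less_threshold[OF finite_edges kpos threshold exit] by simp
  then have "0 < q (i + 1) * boundary_flux E k (\<lambda>_. 1) {1..i}"
    using boundary_flux_q_prefix[of i] i by simp
  then show ?thesis using q_pos[of "i + 1"] i by (simp add: zero_less_mult_iff)
qed

lemma boundary_flux_T_eq_0_iff: "boundary_flux E k (\<lambda>_. 1) {1..t} = 0 \<longleftrightarrow> {1..t} = {1..m}"
proof
  assume "boundary_flux E k (\<lambda>_. 1) {1..t} = 0"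
  then have "\<forall>(a, b)\<in>E. a \<in> {1..t} \<longleftrightarrow> b \<in> {1..t}"
    using boundary_flux_one_eq_0_iff[OF finite_edges kpos T_closed] T_closed by blast
  then show "{1..t} = {1..m}"
    using T_nonempty T_le by (intro weakly_connected_no_boundary_edges[OF conn]) auto
next
  assume "{1..t} = {1..m}"
  then show "boundary_flux E k (\<lambda>_. 1) {1..t} = 0"
    using boundary_flux_one_eq_0_iff[OF finite_edges kpos T_closed] simple
    by (auto simp: simple_digraph_def)
qed

end

theorem lemma14:
  fixes m t :: nat and E :: "(nat \<times> nat) set" and k :: "nat \<times> nat \<Rightarrow> real"
    and q :: "nat \<Rightarrow> real" and \<beta> :: "nat \<Rightarrow> real"
  assumes simple: "simple_digraph {1..m} E"
    and kpos: "\<forall>e\<in>E. k e > 0"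
    and conn: "weakly_connected {1..m} E"
    and TVs: "{1..t} \<subseteq> source_vertices {1..m} E"
    and Tterm: "terminal_strong_component {1..m} E {1..t}"
    and qnonneg: "\<forall>j\<in>source_vertices {1..m} E. q j \<ge> 0"
    and qker: "\<forall>i\<in>{1..m}. rect_laplacian_mult {1..m} E k q i = 0"
    and qsupp: "{j \<in> source_vertices {1..m} E. q j \<noteq> 0} = {1..t}"
    and qmono: "\<forall>i. 1 \<le> i \<and> i < t \<longrightarrow> q i \<ge> q (i + 1)"
    and qpos: "q t > 0"
    and beta: "\<beta> = rect_laplacian_mult {1..m} E k (\<lambda>_. 1)"
  shows "(\<forall>i\<in>{1..t}. (\<Sum>i'=1..i. \<beta> i') \<ge> 0)
       \<and> (\<forall>i\<in>{1..t}. i < t \<and> q i > q (i + 1) \<longrightarrow> (\<Sum>i'=1..i. \<beta> i') > 0)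
       \<and> ((\<Sum>i'=1..t. \<beta> i') = 0 \<longleftrightarrow> {1..t} = {1..m})"
proof -
  interpret terminal_kernel m t E k q
    using simple kpos conn Tterm qnonneg qker qsupp qmono by unfold_locales
  have prefix_sum: "(\<Sum>i'=1..i. \<beta> i') = boundary_flux E k (\<lambda>_. 1) {1..i}" if "i \<le> t" for i
    unfolding beta using that T_le by (intro sum_rect_laplacian_mult_eq_boundary_flux[OF simple]) auto
  show ?thesis
  proof (intro conjI ballI impI)
    fix i assume "i \<in> {1..t}"
    then show "0 \<le> (\<Sum>i'=1..i. \<beta> i')"
      using prefix_boundary_flux_nonneg prefix_sum by simp
    assume "i < t \<and> q i > q (i + 1)"
    with \<open>i \<in> {1..t}\<close> show "0 < (\<Sum>i'=1..i. \<beta> i')"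
      using prefix_boundary_flux_pos prefix_sum by simp
  next
    show "(\<Sum>i'=1..t. \<beta> i') = 0 \<longleftrightarrow> {1..t} = {1..m}"
      using boundary_flux_T_eq_0_iff prefix_sum[of t] by simp
  qed
qed

end
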